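(* Let $\Sigma=(\mathbf{x},\mathbf{F})$ be an LP seed of rank $n\ge2$ satisfying Condition 1.2. Then $$\mathrm{Im}(\varphi)=R[x_2,x_2^{(-)},\dots,x_n,x_n^{(-)}],\qquad\text{where } x_j^{(-)}=\begin{cases}x'_j,& \text{if } F_j \text{ does not involve } x_1,\\ x_j^{-1},&\text{otherwise.}\end{cases}$$
   Context: $R$ is a unique factorization domain containing $\mathbb{Z}$ and $\mathcal{F}$ is the field of rational functions in $n$ variables over $\mathrm{Frac}(R)$. An LP seed of rank $n$ is a pair $(\mathbf{x},\mathbf{F})$ where $\mathbf{x}=\{x_1,\dots,x_n\}$ is a transcendence basis of $\mathcal{F}$ over $\mathrm{Frac}(R)$ and $\mathbf{F}=\{F_1,\dots,F_n\}$ are irreducible polynomials in $R[x_1,\dots,x_n]$ with $x_j\nmid F_i$ for all $i,j$ and $F_i$ not involving $x_i$. The exchange Laurent polynomial is $\hat F_j=F_j/\prod_{k\neq j}x_k^{a_k}$, with $a_k\in\mathbb{Z}_{\ge0}$ maximal such that $F_k^{a_k}$ divides $F_j|_{x_k\leftarrow F_k/x'_k}$ in $R[x_1,\dots,x_{k-1},(x'_k)^{-1},x_{k+1},\dots,x_n]$. Set $x'_j=\hat F_j/x_j$. Lexicographic order on $\mathbb{Z}^n$: $\mathbf{a}\prec\mathbf{a}'$ if the first nonzero entry of $\mathbf{a}'-\mathbf{a}$ is positive; the lexicographically first monomial of a polynomial is its term with $\prec$-smallest exponent vector. Condition 1.2: for every $k\in[1,n]$, with $M_k$ the lexicographically first monomial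 of $F_k$: (i) $\hat F_k=F_k$; (ii) $M_k=x_{k+1}^{v_{k+1,k}}\cdots x_n^{v_{n,k}}$ (coefficient $1$) with $v_{\cdot,k}\in\mathbb{Z}_{\ge0}$ for $k\in[1,n-1]$, and $M_n=1$; (iii) if $k\ne1$ and $F_k$ involves $x_1$, then every monomial of $F_k-M_k$ is divisible by $x_1$; (iv) if $k\notin\{1,2\}$, $F_k$ does not involve $x_1$, and there is $i\in[2,k-1]$ such that $x_k$ divides $M_i$, then every monomial of $F_k-M_k$ is divisible by $x_i$. Under (i), $R[x_2,x'_2,\dots,x_n,x'_n]\subseteq R[x_1,x_2^{\pm1},\dots,x_n^{\pm1}]$; $\varphi:R[x_2,x'_2,\dots,x_n,x'_n]\to R[x_2^{\pm1},\dots,x_n^{\pm1}]$ is the restriction of the $R$-algebra homomorphism $R[x_1,x_2^{\pm1},\dots,x_n^{\pm1}]\to R[x_2^{\pm1},\dots,x_n^{\pm1}]$ sending $x_1\mapsto0$, $x_i^{\pm1}\mapsto x_i^{\pm1}$ ($i\ge2$). *)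

theory Defs
  imports "HOL-Library.Poly_Mapping" "HOL-Computational_Algebra.Factorial_Ring"
begin

text \<open>The cluster variables x_1,...,x_n of the seed form a transcendence basis, so the
  subring R[x_1^{\<pm>1},...,x_n^{\<pm>1}] of the ambient field is identified with the
  Laurent polynomial ring over R in the variables indexed by 1..n.
  A Laurent polynomial is a finitely supported map from exponent vectors
  (finitely supported maps nat to int, index i = exponent of x_i) to coefficients in R.\<close>

type_synonym 'a lpoly = "(nat \<Rightarrow>\<^sub>0 int) \<Rightarrow>\<^sub>0 'a"

definition lconst :: "'a::comm_ring_1 \<Rightarrow> 'a lpoly" where
  "lconst c = Poly_Mapping.single 0 c"

definition lvar :: "nat \<Rightarrow> 'a::comm_ring_1 lpoly" where
  "lvar i = Poly_Mapping.single (Poly_Mapping.single i 1) 1"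

definition lvar_pow :: "nat \<Rightarrow> int \<Rightarrow> 'a::comm_ring_1 lpoly" where
  "lvar_pow i e = Poly_Mapping.single (Poly_Mapping.single i e) 1"

definition expo_ok :: "nat \<Rightarrow> (nat \<Rightarrow>\<^sub>0 int) \<Rightarrow> bool" where
  "expo_ok n m \<longleftrightarrow> (\<forall>i. Poly_Mapping.lookup m i \<noteq> 0 \<longrightarrow> i \<in> {1..n})"

definition is_poly :: "nat \<Rightarrow> 'a::comm_ring_1 lpoly \<Rightarrow> bool" where
  "is_poly n p \<longleftrightarrow> (\<forall>m \<in> Poly_Mapping.keys p. expo_ok n m \<and> (\<forall>i. Poly_Mapping.lookup m i \<ge> 0))"

definition polyring :: "nat \<Rightarrow> 'a::comm_ring_1 lpoly set" where
  "polyring n = {p. is_poly n p}"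

definition pdvd :: "nat \<Rightarrow> 'a::comm_ring_1 lpoly \<Rightarrow> 'a lpoly \<Rightarrow> bool" where
  "pdvd n a b \<longleftrightarrow> (\<exists>c \<in> polyring n. b = a * c)"

definition punit :: "nat \<Rightarrow> 'a::comm_ring_1 lpoly \<Rightarrow> bool" where
  "punit n a \<longleftrightarrow> a \<in> polyring n \<and> (\<exists>c \<in> polyring n. a * c = 1)"

definition pirreducible :: "nat \<Rightarrow> 'a::comm_ring_1 lpoly \<Rightarrow> bool" where
  "pirreducible n p \<longleftrightarrow> p \<in> polyring n \<and> p \<noteq> 0 \<and> \<not> punit n p \<and>
     (\<forall>a \<in> polyring n. \<forall>b \<in> polyring n. p = a * b \<longrightarrow> punit n a \<or> punit n b)"

definition involves :: "'a::comm_ring_1 lpoly \<Rightarrow> nat \<Rightarrow> bool" where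
  "involves p i \<longleftrightarrow> (\<exists>m \<in> Poly_Mapping.keys p. Poly_Mapping.lookup m i \<noteq> 0)"

definition LP_seed :: "nat \<Rightarrow> (nat \<Rightarrow> 'a::comm_ring_1 lpoly) \<Rightarrow> bool" where
  "LP_seed n F \<longleftrightarrow> (\<forall>i \<in> {1..n}. pirreducible n (F i) \<and> \<not> involves (F i) i \<and>
      (\<forall>j \<in> {1..n}. \<not> pdvd n (lvar j) (F i)))"

text \<open>Substitution x_k \<leftarrow> G * y in a polynomial p, where the new variable
  y = (x'_k)^{-1} occupies the k-th slot: the term c x^m is sent to
  c (prod_{i\<noteq>k} x_i^{m_i}) y^{m_k} G^{m_k}.\<close>
definition subst_var :: "nat \<Rightarrow> 'a::comm_ring_1 lpoly \<Rightarrow> 'a lpoly \<Rightarrow> 'a lpoly" where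
  "subst_var k G p = (\<Sum>m \<in> Poly_Mapping.keys p. Poly_Mapping.single m (Poly_Mapping.lookup p m) * G ^ nat (Poly_Mapping.lookup m k))"

definition exch_exp :: "nat \<Rightarrow> (nat \<Rightarrow> 'a::comm_ring_1 lpoly) \<Rightarrow> nat \<Rightarrow> nat \<Rightarrow> nat" where
  "exch_exp n F j k = (GREATEST a. pdvd n (F k ^ a) (subst_var k (F k) (F j)))"

definition hatF :: "nat \<Rightarrow> (nat \<Rightarrow> 'a::comm_ring_1 lpoly) \<Rightarrow> nat \<Rightarrow> 'a lpoly" where
  "hatF n F j = F j * (\<Prod>k \<in> {1..n} - {j}. lvar_pow k (- int (exch_exp n F j k)))"

definition xprime :: "nat \<Rightarrow> (nat \<Rightarrow> 'a::comm_ring_1 lpoly) \<Rightarrow> nat \<Rightarrow> 'a lpoly" where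
  "xprime n F j = hatF n F j * lvar_pow j (-1)"

definition lex_less :: "nat \<Rightarrow> (nat \<Rightarrow>\<^sub>0 int) \<Rightarrow> (nat \<Rightarrow>\<^sub>0 int) \<Rightarrow> bool" where
  "lex_less n a b \<longleftrightarrow> (\<exists>i \<in> {1..n}. Poly_Mapping.lookup a i < Poly_Mapping.lookup b i \<and> (\<forall>j \<in> {1..<i}. Poly_Mapping.lookup a j = Poly_Mapping.lookup b j))"

definition lex_first :: "nat \<Rightarrow> 'a::comm_ring_1 lpoly \<Rightarrow> (nat \<Rightarrow>\<^sub>0 int)" where
  "lex_first n p = (THE m. m \<in> Poly_Mapping.keys p \<and> (\<forall>m' \<in> Poly_Mapping.keys p. m' \<noteq> m \<longrightarrow> lex_less n m m'))"

definition lex_first_mono :: "nat \<Rightarrow> 'a::comm_ring_1 lpoly \<Rightarrow> 'a lpoly" where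
  "lex_first_mono n p = Poly_Mapping.single (lex_first n p) (Poly_Mapping.lookup p (lex_first n p))"

definition condition_1_2 :: "nat \<Rightarrow> (nat \<Rightarrow> 'a::comm_ring_1 lpoly) \<Rightarrow> bool" where
  "condition_1_2 n F \<longleftrightarrow> (\<forall>k \<in> {1..n}.
     hatF n F k = F k \<and>
     Poly_Mapping.lookup (F k) (lex_first n (F k)) = 1 \<and>
     (k < n \<longrightarrow> (\<forall>i \<in> {1..k}. Poly_Mapping.lookup (lex_first n (F k)) i = 0)) \<and>
     (k = n \<longrightarrow> lex_first n (F k) = 0) \<and>
     ((k \<noteq> 1 \<and> involves (F k) 1) \<longrightarrow>
        (\<forall>m \<in> Poly_Mapping.keys (F k - lex_first_mono n (F k)). Poly_Mapping.lookup m 1 \<ge> 1)) \<and>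
     ((k \<notin> {1, 2} \<and> \<not> involves (F k) 1) \<longrightarrow>
        (\<forall>i \<in> {2..k-1}. Poly_Mapping.lookup (lex_first n (F i)) k \<ge> 1 \<longrightarrow>
           (\<forall>m \<in> Poly_Mapping.keys (F k - lex_first_mono n (F k)). Poly_Mapping.lookup m i \<ge> 1))))"

inductive_set ralg :: "'a::comm_ring_1 lpoly set \<Rightarrow> 'a lpoly set" for S where
  const: "lconst c \<in> ralg S"
| gen: "s \<in> S \<Longrightarrow> s \<in> ralg S"
| add: "p \<in> ralg S \<Longrightarrow> q \<in> ralg S \<Longrightarrow> p + q \<in> ralg S"
| mult: "p \<in> ralg S \<Longrightarrow> q \<in> ralg S \<Longrightarrow> p * q \<in> ralg S"

text \<open>phi: on R[x_1, x_2^{\<pm>1},...,x_n^{\<pm>1}] this is the homomorphism x_1 \<mapsto> 0, i.e.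
  it keeps exactly the terms in which x_1 does not occur.\<close>
definition phi :: "'a::comm_ring_1 lpoly \<Rightarrow> 'a lpoly" where
  "phi p = Poly_Mapping.Abs_poly_mapping (\<lambda>m. if Poly_Mapping.lookup m 1 = 0 then Poly_Mapping.lookup p m else 0)"

definition xminus :: "nat \<Rightarrow> (nat \<Rightarrow> 'a::comm_ring_1 lpoly) \<Rightarrow> nat \<Rightarrow> 'a lpoly" where
  "xminus n F j = (if \<not> involves (F j) 1 then xprime n F j else lvar_pow j (-1))"

end

theory Submission
  imports Defs
begin

text \<open>The image of phi is generated by the x_j and the phi(x'_j), j \<ge> 2. If F_j does not
  involve x_1 then phi(x'_j) = x'_j; otherwise Condition 1.2(iii) kills every term of F_j except
  its first monomial M_j, so phi(x'_j) = M_j x_j^{-1}. This gives one inclusion, and the other one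
  amounts to x_j^{-1} \<in> Im(phi) whenever F_j involves x_1.
  That is shown by descending induction on j: starting from M_j x_j^{-1}, the variables x_i (i > j)
  of M_j are cancelled one at a time. If F_i involves x_1, then x_i^{-1} is available by induction.
  Otherwise Condition 1.2(iv) yields x_i x'_i = M_i + x_{i'} P with P a polynomial, which trades
  x_i for M_i; as M_i only involves variables of index > i, a second descending induction on i
  terminates.\<close>

section \<open>Laurent monomials and generated subalgebras\<close>

definition lmonom :: "(nat \<Rightarrow>\<^sub>0 int) \<Rightarrow> 'a::comm_ring_1 lpoly" where
  "lmonom m = Poly_Mapping.single m 1"

definition evec :: "nat \<Rightarrow> nat \<Rightarrow>\<^sub>0 int" where
  "evec k = Poly_Mapping.single k 1"

lemma lmonom_add: "lmonom (a + b) = (lmonom a * lmonom b :: 'a::comm_ring_1 lpoly)"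
  by (simp add: lmonom_def mult_single)

lemma lmonom_0 [simp]: "lmonom 0 = (1 :: 'a::comm_ring_1 lpoly)"
  by (simp add: lmonom_def)

lemma keys_lmonom [simp]: "Poly_Mapping.keys (lmonom m :: 'a::comm_ring_1 lpoly) = {m}"
  by (simp add: lmonom_def)

lemma lookup_evec: "Poly_Mapping.lookup (evec k) i = (if i = k then 1 else 0)"
  by (simp add: evec_def lookup_single)

lemma lvar_eq_lmonom: "lvar i = lmonom (evec i)"
  by (simp add: lvar_def lmonom_def evec_def)

lemma lvar_pow_minus_one: "lvar_pow i (-1) = lmonom (- evec i)"
  by (simp add: lvar_pow_def lmonom_def evec_def single_uminus)

lemma lmonom_single_int:
  "lmonom (Poly_Mapping.single i (int k)) = (lvar i ^ k :: 'a::comm_ring_1 lpoly)"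
proof (induction k)
  case (Suc k)
  have "Poly_Mapping.single i (int (Suc k)) = evec i + Poly_Mapping.single i (int k)"
    by (simp add: evec_def flip: single_add)
  then show ?case using Suc by (simp add: lmonom_add lvar_eq_lmonom)
qed simp

lemma poly_mapping_sum_singles:
  "p = (\<Sum>m \<in> Poly_Mapping.keys p. Poly_Mapping.single m (Poly_Mapping.lookup p m))"
proof (rule poly_mapping_eqI)
  fix k
  have "(\<Sum>m \<in> Poly_Mapping.keys p. Poly_Mapping.lookup (Poly_Mapping.single m (Poly_Mapping.lookup p m)) k)
     = (\<Sum>m \<in> Poly_Mapping.keys p. if m = k then Poly_Mapping.lookup p k else 0)"
    by (rule sum.cong) (auto simp: lookup_single)
  then show "Poly_Mapping.lookup p k
      = Poly_Mapping.lookup (\<Sum>m \<in> Poly_Mapping.keys p. Poly_Mapping.single m (Poly_Mapping.lookup p m)) k"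
    by (simp add: lookup_sum in_keys_iff)
qed

lemma ralg_0: "0 \<in> ralg S"
  using ralg.const[of 0 S] by (simp add: lconst_def)

lemma ralg_1: "1 \<in> ralg S"
  using ralg.const[of 1 S] by (simp add: lconst_def)

lemma ralg_uminus: "p \<in> ralg S \<Longrightarrow> - p \<in> ralg S"
  using ralg.mult[OF ralg.const[of "-1"]] by (simp add: lconst_def single_uminus)

lemma ralg_diff: "p \<in> ralg S \<Longrightarrow> q \<in> ralg S \<Longrightarrow> p - q \<in> ralg S"
  using ralg.add[OF _ ralg_uminus] by (metis diff_conv_add_uminus)

lemma ralg_power: "p \<in> ralg S \<Longrightarrow> p ^ k \<in> ralg S"
  by (induction k) (auto intro: ralg_1 ralg.mult)

lemma ralg_sum: "(\<And>i. i \<in> I \<Longrightarrow> f i \<in> ralg S) \<Longrightarrow> sum f I \<in> ralg S"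
  by (induction I rule: infinite_finite_induct) (auto intro: ralg_0 ralg.add)

lemma ralg_subset:
  assumes "S \<subseteq> ralg T" shows "ralg S \<subseteq> ralg T"
proof
  fix p assume "p \<in> ralg S"
  then show "p \<in> ralg T"
    by induction (use assms in \<open>auto intro: ralg.intros\<close>)
qed

definition poly_expo :: "nat set \<Rightarrow> (nat \<Rightarrow>\<^sub>0 int) \<Rightarrow> bool" where
  "poly_expo A m \<longleftrightarrow> (\<forall>k. 0 \<le> Poly_Mapping.lookup m k \<and> (Poly_Mapping.lookup m k \<noteq> 0 \<longrightarrow> k \<in> A))"

lemma poly_expo_0: "poly_expo A 0"
  by (simp add: poly_expo_def)

lemma poly_expo_add: "poly_expo A a \<Longrightarrow> poly_expo A b \<Longrightarrow> poly_expo A (a + b)"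
  unfolding poly_expo_def by (simp add: lookup_add) (metis add.right_neutral add_nonneg_nonneg)

lemma poly_expo_mono: "poly_expo A m \<Longrightarrow> A \<subseteq> B \<Longrightarrow> poly_expo B m"
  unfolding poly_expo_def by blast

lemma poly_expo_below:
  "poly_expo A m \<Longrightarrow> (\<And>k. 0 \<le> Poly_Mapping.lookup N k \<and> Poly_Mapping.lookup N k \<le> Poly_Mapping.lookup m k)
    \<Longrightarrow> poly_expo A N"
  unfolding poly_expo_def by (metis order_antisym)

lemma poly_expo_minus_evec:
  "poly_expo A m \<Longrightarrow> k \<in> A \<Longrightarrow> 1 \<le> Poly_Mapping.lookup m k \<Longrightarrow> poly_expo A (m - evec k)"
  unfolding poly_expo_def by (auto simp: lookup_minus lookup_evec)

lemma lmonom_in_ralg: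
  fixes G :: "'a::comm_ring_1 lpoly set"
  assumes "\<And>k. k \<in> A \<Longrightarrow> lvar k \<in> ralg G"
  shows "poly_expo A m \<Longrightarrow> lmonom m \<in> ralg G"
proof (induction m rule: update_induct)
  case (update f a b)
  have upd: "Poly_Mapping.update a b f = f + Poly_Mapping.single a b"
    using update.hyps(1)
    by (intro poly_mapping_eqI) (auto simp: lookup_update lookup_add lookup_single in_keys_iff)
  have lookup_upd: "Poly_Mapping.lookup (Poly_Mapping.update a b f) k = (if k = a then b else Poly_Mapping.lookup f k)" for k
    by (simp add: lookup_update)
  have "a \<in> A" "0 \<le> b"
    using update.prems update.hyps(2) lookup_upd[of a] unfolding poly_expo_def by metis+
  moreover have "poly_expo A f"
    using update.prems update.hyps(1) lookup_upd unfolding poly_expo_def in_keys_iff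
    by (metis order_refl)
  moreover obtain k where "b = int k" using \<open>0 \<le> b\<close> by (metis nonneg_int_cases)
  ultimately have "lmonom (Poly_Mapping.single a b) \<in> ralg G"
    using assms by (simp add: lmonom_single_int ralg_power)
  then show ?case using update.IH \<open>poly_expo A f\<close> by (simp add: upd lmonom_add ralg.mult)
qed (simp add: ralg_1)

lemma poly_in_ralg:
  fixes G :: "'a::comm_ring_1 lpoly set"
  assumes "\<And>k. k \<in> A \<Longrightarrow> lvar k \<in> ralg G" and "\<And>m. m \<in> Poly_Mapping.keys p \<Longrightarrow> poly_expo A m"
  shows "p \<in> ralg G"
proof -
  have "p = (\<Sum>m \<in> Poly_Mapping.keys p. lconst (Poly_Mapping.lookup p m) * lmonom m)"
    by (subst poly_mapping_sum_singles) (simp add: lconst_def lmonom_def mult_single)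
  also have "\<dots> \<in> ralg G"
    by (rule ralg_sum) (auto intro!: ralg.mult ralg.const lmonom_in_ralg assms)
  finally show ?thesis .
qed

lemma box_descent:
  fixes M :: "'i \<Rightarrow>\<^sub>0 int"
  assumes "P M"
    and step: "\<And>N k. (\<And>l. 0 \<le> Poly_Mapping.lookup N l \<and> Poly_Mapping.lookup N l \<le> Poly_Mapping.lookup M l)
      \<Longrightarrow> Poly_Mapping.lookup N k < Poly_Mapping.lookup M k \<Longrightarrow> P (N + Poly_Mapping.single k 1) \<Longrightarrow> P N"
    and "\<And>l. 0 \<le> Poly_Mapping.lookup M l"
  shows "P 0"
proof -
  define gap where "gap N = (\<Sum>k \<in> Poly_Mapping.keys M. nat (Poly_Mapping.lookup M k - Poly_Mapping.lookup N k))"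
    for N :: "'i \<Rightarrow>\<^sub>0 int"
  have "P N" if "\<And>l. 0 \<le> Poly_Mapping.lookup N l \<and> Poly_Mapping.lookup N l \<le> Poly_Mapping.lookup M l" for N
    using that
  proof (induction "gap N" arbitrary: N rule: less_induct)
    case less
    show ?case
    proof (cases "\<exists>k. Poly_Mapping.lookup N k < Poly_Mapping.lookup M k")
      case False
      then have "N = M" using less.prems by (intro poly_mapping_eqI) (meson not_less order_antisym)
      then show ?thesis using \<open>P M\<close> by simp
    next
      case True
      then obtain k where k: "Poly_Mapping.lookup N k < Poly_Mapping.lookup M k" by blast
      let ?N' = "N + Poly_Mapping.single k 1"
      have box: "0 \<le> Poly_Mapping.lookup ?N' l \<and> Poly_Mapping.lookup ?N' l \<le> Poly_Mapping.lookup M l" for l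
        using less.prems[of l] k by (auto simp: lookup_add lookup_single when_def)
      have "k \<in> Poly_Mapping.keys M" using less.prems[of k] k by (auto simp: in_keys_iff)
      then have "gap ?N' < gap N" unfolding gap_def
        by (intro sum_strict_mono_ex1) (use k in \<open>auto simp: lookup_add lookup_single when_def\<close>)
      then have "P ?N'" using less.hyps box by blast
      then show ?thesis using step less.prems k by blast
    qed
  qed
  from this[of 0] show ?thesis using assms(3) by simp
qed

section \<open>The specialisation x_1 \<mapsto> 0\<close>

lemma lookup_phi:
  "Poly_Mapping.lookup (phi p) m = (if Poly_Mapping.lookup m 1 = 0 then Poly_Mapping.lookup p m else 0)"
proof -
  have "finite {m. (if Poly_Mapping.lookup m 1 = 0 then Poly_Mapping.lookup p m else 0) \<noteq> 0}"
    by (rule finite_subset[of _ "Poly_Mapping.keys p"]) (auto simp: in_keys_iff)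
  then show ?thesis unfolding phi_def by simp
qed

lemma phi_add: "phi (p + q) = phi p + phi q"
  by (rule poly_mapping_eqI) (simp add: lookup_phi lookup_add)

lemma phi_0: "phi 0 = 0"
  by (rule poly_mapping_eqI) (simp add: lookup_phi)

lemma phi_sum: "phi (sum f I) = (\<Sum>i\<in>I. phi (f i))"
  by (induction I rule: infinite_finite_induct) (simp_all add: phi_0 phi_add)

lemma phi_single:
  "phi (Poly_Mapping.single m c) = (if Poly_Mapping.lookup m 1 = 0 then Poly_Mapping.single m c else 0)"
  by (rule poly_mapping_eqI) (auto simp: lookup_phi lookup_single when_def)

lemma phi_lconst: "phi (lconst c) = lconst c"
  by (simp add: lconst_def phi_single)

lemma phi_lmonom: "Poly_Mapping.lookup m 1 = 0 \<Longrightarrow> phi (lmonom m) = lmonom m"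
  by (simp add: lmonom_def phi_single)

lemma phi_eq_self:
  "(\<And>m. m \<in> Poly_Mapping.keys p \<Longrightarrow> Poly_Mapping.lookup m 1 = 0) \<Longrightarrow> phi p = p"
  by (rule poly_mapping_eqI) (auto simp: lookup_phi in_keys_iff)

lemma phi_eq_0:
  "(\<And>m. m \<in> Poly_Mapping.keys p \<Longrightarrow> Poly_Mapping.lookup m 1 \<noteq> 0) \<Longrightarrow> phi p = 0"
  by (rule poly_mapping_eqI) (auto simp: lookup_phi in_keys_iff)

text \<open>Membership in R[x_1, x_2^{\<pm>1}, ..., x_n^{\<pm>1}], the ring on which phi is multiplicative.\<close>
definition x1_nonneg :: "'a::comm_ring_1 lpoly \<Rightarrow> bool" where
  "x1_nonneg p \<longleftrightarrow> (\<forall>m \<in> Poly_Mapping.keys p. 0 \<le> Poly_Mapping.lookup m 1)"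

lemma x1_nonneg_add: "x1_nonneg p \<Longrightarrow> x1_nonneg q \<Longrightarrow> x1_nonneg (p + q)"
  unfolding x1_nonneg_def using keys_add[of p q] by blast

lemma x1_nonneg_mult: "x1_nonneg p \<Longrightarrow> x1_nonneg q \<Longrightarrow> x1_nonneg (p * q)"
  unfolding x1_nonneg_def using keys_mult[of p q] by (fastforce simp: lookup_add)

lemma x1_nonneg_lmonom: "0 \<le> Poly_Mapping.lookup m 1 \<Longrightarrow> x1_nonneg (lmonom m)"
  by (simp add: x1_nonneg_def)

lemma x1_nonneg_lconst: "x1_nonneg (lconst c)"
  by (simp add: x1_nonneg_def lconst_def)

lemma x1_nonneg_ralg:
  assumes "\<And>s. s \<in> S \<Longrightarrow> x1_nonneg s" shows "p \<in> ralg S \<Longrightarrow> x1_nonneg p"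
  by (induction p rule: ralg.induct) (auto intro: x1_nonneg_add x1_nonneg_mult x1_nonneg_lconst assms)

lemma phi_mult:
  fixes p q :: "'a::comm_ring_1 lpoly"
  assumes "x1_nonneg p" "x1_nonneg q"
  shows "phi (p * q) = phi p * phi q"
proof -
  let ?sp = "\<lambda>a. Poly_Mapping.single a (Poly_Mapping.lookup p a)"
  let ?sq = "\<lambda>b. Poly_Mapping.single b (Poly_Mapping.lookup q b)"
  have "phi p * phi q = (\<Sum>a\<in>Poly_Mapping.keys p. \<Sum>b\<in>Poly_Mapping.keys q. phi (?sp a) * phi (?sq b))"
    by (subst (1 2) poly_mapping_sum_singles) (simp add: phi_sum sum_product)
  also have "\<dots> = (\<Sum>a\<in>Poly_Mapping.keys p. \<Sum>b\<in>Poly_Mapping.keys q. phi (?sp a * ?sq b))"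
  proof (intro sum.cong refl)
    fix a b assume "a \<in> Poly_Mapping.keys p" "b \<in> Poly_Mapping.keys q"
    then have "0 \<le> Poly_Mapping.lookup a 1" "0 \<le> Poly_Mapping.lookup b 1"
      using assms unfolding x1_nonneg_def by auto
    then show "phi (?sp a) * phi (?sq b) = phi (?sp a * ?sq b)"
      by (auto simp: phi_single mult_single lookup_add)
  qed
  also have "\<dots> = phi (p * q)"
    by (subst (3 4) poly_mapping_sum_singles) (simp add: phi_sum sum_product)
  finally show ?thesis by simp
qed

lemma phi_image_ralg:
  fixes S :: "'a::comm_ring_1 lpoly set"
  assumes S: "\<And>s. s \<in> S \<Longrightarrow> x1_nonneg s"
  shows "phi ` ralg S = ralg (phi ` S)"
proof
  have "phi p \<in> ralg (phi ` S)" if "p \<in> ralg S" for p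
    using that
    by induction (auto simp: phi_lconst phi_add phi_mult x1_nonneg_ralg[OF S]
                       intro: ralg.intros)
  then show "phi ` ralg S \<subseteq> ralg (phi ` S)" by blast
next
  show "ralg (phi ` S) \<subseteq> phi ` ralg S"
  proof
    fix y assume "y \<in> ralg (phi ` S)"
    then show "y \<in> phi ` ralg S"
    proof induction
      case (const c)
      show ?case by (rule image_eqI[where x = "lconst c"]) (simp_all add: phi_lconst ralg.const)
    next
      case (add p q)
      then obtain p' q' where "p' \<in> ralg S" "q' \<in> ralg S" "p = phi p'" "q = phi q'" by blast
      then show ?case by (auto simp: phi_add intro!: image_eqI[where x = "p' + q'"] ralg.add)
    next
      case (mult p q)
      then obtain p' q' where "p' \<in> ralg S" "q' \<in> ralg S" "p = phi p'" "q = phi q'" by blast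
      then show ?case
        by (auto simp: phi_mult x1_nonneg_ralg[OF S] intro!: image_eqI[where x = "p' * q'"] ralg.mult)
    qed (auto intro: ralg.gen)
  qed
qed

section \<open>Seeds satisfying Condition 1.2\<close>

locale LP_seed_cond =
  fixes n :: nat and F :: "nat \<Rightarrow> 'a::comm_ring_1 lpoly"
  assumes F_poly: "i \<in> {1..n} \<Longrightarrow> is_poly n (F i)"
    and cond: "condition_1_2 n F"
begin

abbreviation M :: "nat \<Rightarrow> nat \<Rightarrow>\<^sub>0 int" where
  "M i \<equiv> lex_first n (F i)"

lemma keys_F:
  assumes "i \<in> {1..n}" "m \<in> Poly_Mapping.keys (F i)"
  shows "expo_ok n m" "0 \<le> Poly_Mapping.lookup m k"
  using F_poly[OF assms(1)] assms(2) unfolding is_poly_def by auto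

lemma x1_nonneg_F: "i \<in> {1..n} \<Longrightarrow> x1_nonneg (F i)"
  unfolding x1_nonneg_def using keys_F by blast

lemma poly_expo_key_F:
  assumes "i \<in> {1..n}" "\<not> involves (F i) 1" "m \<in> Poly_Mapping.keys (F i)"
  shows "poly_expo {2..n} m"
  unfolding poly_expo_def
proof (intro allI conjI impI)
  fix k
  show "0 \<le> Poly_Mapping.lookup m k" using keys_F(2)[OF assms(1,3)] .
  assume nz: "Poly_Mapping.lookup m k \<noteq> 0"
  then have "k \<in> {1..n}" using keys_F(1)[OF assms(1,3)] unfolding expo_ok_def by blast
  moreover have "k \<noteq> 1" using nz assms(2,3) unfolding involves_def by blast
  ultimately show "k \<in> {2..n}" by auto
qed

lemma lookup_F_M: "k \<in> {1..n} \<Longrightarrow> Poly_Mapping.lookup (F k) (M k) = 1"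
  using cond unfolding condition_1_2_def by blast

lemma M_in_keys: "k \<in> {1..n} \<Longrightarrow> M k \<in> Poly_Mapping.keys (F k)"
  by (simp add: in_keys_iff lookup_F_M)

lemma lex_first_mono_F: "k \<in> {1..n} \<Longrightarrow> lex_first_mono n (F k) = lmonom (M k)"
  by (simp add: lex_first_mono_def lmonom_def lookup_F_M)

lemma poly_expo_M:
  assumes k: "k \<in> {1..n}"
  shows "poly_expo {k+1..n} (M k)"
  unfolding poly_expo_def
proof (intro allI conjI impI)
  fix l
  show "0 \<le> Poly_Mapping.lookup (M k) l" using keys_F(2)[OF k M_in_keys[OF k]] .
  assume l: "Poly_Mapping.lookup (M k) l \<noteq> 0"
  then have "l \<in> {1..n}" using keys_F(1)[OF k M_in_keys[OF k]] unfolding expo_ok_def by blast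
  moreover have "k < l"
  proof (cases "k < n")
    case True
    then have "\<forall>i\<in>{1..k}. Poly_Mapping.lookup (M k) i = 0"
      using cond k unfolding condition_1_2_def by blast
    then show ?thesis using \<open>l \<in> {1..n}\<close> l by (meson atLeastAtMost_iff not_less)
  next
    case False
    then have "M k = 0" using cond k unfolding condition_1_2_def by auto
    then show ?thesis using l by simp
  qed
  ultimately show "l \<in> {k+1..n}" by simp
qed

lemma xprime_eq:
  assumes "k \<in> {1..n}"
  shows "xprime n F k = F k * lmonom (- evec k)"
proof -
  have "hatF n F k = F k" using cond assms unfolding condition_1_2_def by blast
  then show ?thesis by (simp add: xprime_def lvar_pow_minus_one)
qed

lemma F_minus_M_divisible_by_x1:
  assumes "k \<in> {2..n}" "involves (F k) 1" "m \<in> Poly_Mapping.keys (F k - lmonom (M k))"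
  shows "1 \<le> Poly_Mapping.lookup m 1"
proof -
  have k: "k \<in> {1..n}" "k \<noteq> 1" using assms(1) by auto
  then have "\<forall>m \<in> Poly_Mapping.keys (F k - lex_first_mono n (F k)). 1 \<le> Poly_Mapping.lookup m 1"
    using cond assms(2) unfolding condition_1_2_def by blast
  then show ?thesis using assms(3) lex_first_mono_F[OF k(1)] by simp
qed

lemma F_minus_M_divisible_by_var:
  assumes "k \<in> {3..n}" "\<not> involves (F k) 1" "i \<in> {2..k-1}" "1 \<le> Poly_Mapping.lookup (M i) k"
    and "m \<in> Poly_Mapping.keys (F k - lmonom (M k))"
  shows "1 \<le> Poly_Mapping.lookup m i"
proof -
  have k: "k \<in> {1..n}" "k \<notin> {1, 2}" using assms(1) by auto
  then have "\<forall>m \<in> Poly_Mapping.keys (F k - lex_first_mono n (F k)). 1 \<le> Poly_Mapping.lookup m i"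
    using cond assms(2-4) unfolding condition_1_2_def by blast
  then show ?thesis using assms(5) lex_first_mono_F[OF k(1)] by simp
qed

definition gens :: "'a lpoly set" where
  "gens = (\<Union>j\<in>{2..n}. {lvar j, xprime n F j})"

definition img :: "'a lpoly set" where
  "img = ralg (phi ` gens)"

lemma phi_lvar: "k \<noteq> 1 \<Longrightarrow> phi (lvar k) = lvar k"
  by (simp add: lvar_eq_lmonom phi_lmonom lookup_evec)

lemma phi_xprime_not_involves:
  assumes "j \<in> {2..n}" "\<not> involves (F j) 1"
  shows "phi (xprime n F j) = xprime n F j"
proof (rule phi_eq_self)
  fix m assume "m \<in> Poly_Mapping.keys (xprime n F j)"
  then obtain a where "m = a - evec j" "a \<in> Poly_Mapping.keys (F j)"
    using keys_mult[of "F j" "lmonom (- evec j)"] xprime_eq[of j] assms(1) by auto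
  then show "Poly_Mapping.lookup m 1 = 0"
    using assms unfolding involves_def by (auto simp: lookup_minus lookup_evec)
qed

lemma phi_xprime_involves:
  assumes j: "j \<in> {2..n}" and "involves (F j) 1"
  shows "phi (xprime n F j) = lmonom (M j - evec j)"
proof -
  have j1: "j \<in> {1..n}" "j \<noteq> 1" using j by auto
  have "Poly_Mapping.lookup (M j) 1 = 0"
    using poly_expo_M[OF j1(1)] j1 unfolding poly_expo_def by fastforce
  then have "phi (lmonom (M j)) = lmonom (M j)" by (rule phi_lmonom)
  moreover have "phi (F j - lmonom (M j)) = 0"
    using F_minus_M_divisible_by_x1[OF assms] by (intro phi_eq_0) force
  ultimately have "phi (F j) = lmonom (M j)"
    using phi_add[of "lmonom (M j)" "F j - lmonom (M j)"] by simp
  moreover have "phi (lmonom (- evec j)) = (lmonom (- evec j) :: 'a lpoly)"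
    using j1 by (simp add: phi_lmonom lookup_evec)
  ultimately show ?thesis
    using j1 by (simp add: xprime_eq phi_mult x1_nonneg_F x1_nonneg_lmonom lookup_evec
                      flip: lmonom_add)
qed

lemma x1_nonneg_gens: "s \<in> gens \<Longrightarrow> x1_nonneg s"
  unfolding gens_def
  by (auto simp: lvar_eq_lmonom xprime_eq lookup_evec
           intro!: x1_nonneg_lmonom x1_nonneg_mult x1_nonneg_F)

lemma phi_image_ralg_gens: "phi ` ralg gens = img"
  unfolding img_def using x1_nonneg_gens by (rule phi_image_ralg)

lemma lvar_in_img: "k \<in> {2..n} \<Longrightarrow> lvar k \<in> img"
  unfolding img_def gens_def by (rule ralg.gen) (force simp: phi_lvar)

lemma lmonom_in_img: "poly_expo {2..n} m \<Longrightarrow> lmonom m \<in> img"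
  using lmonom_in_ralg lvar_in_img unfolding img_def by blast

lemma poly_in_img: "(\<And>m. m \<in> Poly_Mapping.keys p \<Longrightarrow> poly_expo {2..n} m) \<Longrightarrow> p \<in> img"
  using poly_in_ralg lvar_in_img unfolding img_def by blast

lemma xprime_in_img: "j \<in> {2..n} \<Longrightarrow> \<not> involves (F j) 1 \<Longrightarrow> xprime n F j \<in> img"
  unfolding img_def gens_def
  by (rule ralg.gen) (use phi_xprime_not_involves in \<open>force\<close>)

definition reaches :: "nat \<Rightarrow> (nat \<Rightarrow>\<^sub>0 int) \<Rightarrow> bool" where
  "reaches j m \<longleftrightarrow> lmonom (m - evec j) \<in> img"

lemma reaches_M: "j \<in> {2..n} \<Longrightarrow> involves (F j) 1 \<Longrightarrow> reaches j (M j)"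
  unfolding reaches_def img_def gens_def
  by (rule ralg.gen) (use phi_xprime_involves in \<open>force\<close>)

lemma reaches_evec: "reaches j (evec j)"
  by (simp add: reaches_def img_def ralg_1)

lemma img_mult: "p \<in> img \<Longrightarrow> q \<in> img \<Longrightarrow> p * q \<in> img"
  unfolding img_def by (rule ralg.mult)

lemma img_diff: "p \<in> img \<Longrightarrow> q \<in> img \<Longrightarrow> p - q \<in> img"
  unfolding img_def by (rule ralg_diff)

lemma reaches_add:
  assumes "reaches j m" "poly_expo {2..n} N"
  shows "reaches j (m + N)"
proof -
  have "lmonom (m + N - evec j) = lmonom (m - evec j) * (lmonom N :: 'a lpoly)"
    by (simp add: algebra_simps flip: lmonom_add)
  then show ?thesis using assms unfolding reaches_def by (simp add: img_mult lmonom_in_img)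
qed

lemma reaches_cancel:
  assumes "lmonom (- evec i) \<in> img" "reaches j (R + evec i)"
  shows "reaches j R"
proof -
  have "lmonom (R - evec j) = lmonom (R + evec i - evec j) * (lmonom (- evec i) :: 'a lpoly)"
    by (simp add: algebra_simps flip: lmonom_add)
  then show ?thesis using assms unfolding reaches_def by (simp add: img_mult)
qed

text \<open>Here x'_i = x_i^{-1} (M_i + x_{i'} P) with P a polynomial in x_2, ..., x_n, so multiplying
  by x_j^{-1} x^{R + e_i} trades the factor x_i for M_i.\<close>
lemma reaches_M_of_not_involves:
  assumes i: "i \<in> {2..n}" and not_inv: "\<not> involves (F i) 1" and i': "i' \<in> {2..n}"
    and divisible: "\<And>m. m \<in> Poly_Mapping.keys (F i - lmonom (M i)) \<Longrightarrow> 1 \<le> Poly_Mapping.lookup m i'"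
    and R: "poly_expo {2..n} R" and reach_i: "reaches j (R + evec i)" and reach_i': "reaches j (R + evec i')"
  shows "reaches j (R + M i)"
proof -
  have i1: "i \<in> {1..n}" using i by auto
  define P where "P = lmonom (- evec i') * (F i - lmonom (M i))"
  \<comment> \<open>not as an equation for F i, which would loop since M i mentions F i\<close>
  have tail_eq: "F i - lmonom (M i) = lmonom (evec i') * P"
    by (simp add: P_def flip: mult.assoc lmonom_add)
  have "P \<in> img"
  proof (rule poly_in_img)
    fix m assume "m \<in> Poly_Mapping.keys P"
    then obtain b where m: "m = b - evec i'" and b: "b \<in> Poly_Mapping.keys (F i - lmonom (M i))"
      using keys_mult[of "lmonom (- evec i')" "F i - lmonom (M i)"] unfolding P_def by auto
    have "b \<in> Poly_Mapping.keys (F i)"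
      using b keys_diff[of "F i" "lmonom (M i)"] M_in_keys[OF i1] by auto
    then show "poly_expo {2..n} m"
      unfolding m using poly_expo_key_F[OF i1 not_inv] divisible[OF b] i' by (intro poly_expo_minus_evec)
  qed
  have shift_i: "lmonom (R + evec i - evec j) * lmonom (- evec i) = (lmonom (R - evec j) :: 'a lpoly)"
    and shift_M: "lmonom (R - evec j) * lmonom (M i) = (lmonom (R + M i - evec j) :: 'a lpoly)"
    and shift_i': "lmonom (R - evec j) * lmonom (evec i') = (lmonom (R + evec i' - evec j) :: 'a lpoly)"
    by (simp_all add: algebra_simps flip: lmonom_add)
  have "lmonom (R + evec i - evec j) * xprime n F i
      = (lmonom (R + evec i - evec j) * lmonom (- evec i)) * F i"
    by (simp only: xprime_eq[OF i1] mult_ac)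
  also have "\<dots> = lmonom (R - evec j) * lmonom (M i) + lmonom (R - evec j) * (F i - lmonom (M i))"
    by (simp only: shift_i) (simp add: algebra_simps)
  also have "\<dots> = lmonom (R - evec j) * lmonom (M i) + (lmonom (R - evec j) * lmonom (evec i')) * P"
    by (simp only: tail_eq mult.assoc)
  finally have "lmonom (R + M i - evec j)
      = lmonom (R + evec i - evec j) * xprime n F i - lmonom (R + evec i' - evec j) * P"
    by (simp add: shift_M shift_i')
  then show ?thesis
    using reach_i reach_i' \<open>P \<in> img\<close> xprime_in_img[OF i not_inv] unfolding reaches_def
    by (simp add: img_mult img_diff)
qed

text \<open>The witness i' is what Condition 1.2(iv) needs to make x_{i'} divide F_i - M_i.\<close>
definition removable :: "nat \<Rightarrow> nat \<Rightarrow> bool" where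
  "removable j i \<longleftrightarrow> (\<forall>R i'. poly_expo {2..n} R \<longrightarrow> i' \<in> {2..i-1} \<longrightarrow> 1 \<le> Poly_Mapping.lookup (M i') i
      \<longrightarrow> reaches j (R + evec i) \<longrightarrow> reaches j (R + evec i') \<longrightarrow> reaches j R)"

lemma reaches_drop_M:
  assumes i: "i \<in> {2..n}" and R: "poly_expo {2..n} R"
    and "reaches j (R + M i)" and reach_i: "reaches j (R + evec i)"
    and removable: "\<And>l. Poly_Mapping.lookup (M i) l \<noteq> 0 \<Longrightarrow> removable j l"
  shows "reaches j R"
proof -
  have M: "poly_expo {i+1..n} (M i)" using poly_expo_M i by simp
  have "reaches j (R + 0)"
  proof (rule box_descent[where M = "M i"])
    show "reaches j (R + M i)" by fact
    show "0 \<le> Poly_Mapping.lookup (M i) l" for l using M unfolding poly_expo_def by blast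
  next
    fix N k
    assume box: "\<And>l. 0 \<le> Poly_Mapping.lookup N l \<and> Poly_Mapping.lookup N l \<le> Poly_Mapping.lookup (M i) l"
      and k: "Poly_Mapping.lookup N k < Poly_Mapping.lookup (M i) k"
      and reach_k: "reaches j (R + (N + Poly_Mapping.single k 1))"
    have N: "poly_expo {2..n} N"
      using poly_expo_below[OF M box] i by (auto elim: poly_expo_mono)
    have Mk: "Poly_Mapping.lookup (M i) k \<noteq> 0" "1 \<le> Poly_Mapping.lookup (M i) k"
      using box[of k] k by auto
    then have "k \<in> {i+1..n}" using M unfolding poly_expo_def by blast
    then have "i \<in> {2..k-1}" using i by auto
    moreover have "reaches j (R + N + evec i)"
      using reaches_add[OF reach_i N] by (simp add: ac_simps)
    ultimately show "reaches j (R + N)"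
      using removable[OF Mk(1)] poly_expo_add[OF R N] Mk(2) reach_k
      unfolding removable_def evec_def by (simp add: ac_simps)
  qed
  then show ?thesis by simp
qed

lemma removable_above:
  assumes j: "j \<in> {2..n}"
    and inv: "\<And>i. i \<in> {j+1..n} \<Longrightarrow> involves (F i) 1 \<Longrightarrow> lmonom (- evec i) \<in> img"
  shows "i \<in> {j+1..n} \<Longrightarrow> removable j i"
proof (induction i rule: nat_descend_induct[where n = n])
  case (descend i)
  show "removable j i" unfolding removable_def
  proof (intro allI impI)
    fix R i'
    assume R: "poly_expo {2..n} R" and i': "i' \<in> {2..i-1}" and Mi': "1 \<le> Poly_Mapping.lookup (M i') i"
      and reach_i: "reaches j (R + evec i)" and reach_i': "reaches j (R + evec i')"
    show "reaches j R"
    proof (cases "involves (F i) 1")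
      case True
      then show ?thesis using reaches_cancel inv descend.prems reach_i by blast
    next
      case False
      have i2: "i \<in> {2..n}" and i3: "i \<in> {3..n}" using descend.prems i' j by auto
      have "reaches j (R + M i)"
        using F_minus_M_divisible_by_var[OF i3 False i' Mi'] i' i3
        by (intro reaches_M_of_not_involves[OF i2 False _ _ R reach_i reach_i']) auto
      moreover have "removable j l" if "Poly_Mapping.lookup (M i) l \<noteq> 0" for l
        using that poly_expo_M[of i] i2 descend.IH descend.prems unfolding poly_expo_def by force
      ultimately show ?thesis using reaches_drop_M[OF i2 R _ reach_i] by blast
    qed
  qed
qed simp

lemma lmonom_minus_evec_in_img: "j \<in> {2..n} \<Longrightarrow> involves (F j) 1 \<Longrightarrow> lmonom (- evec j) \<in> img"
proof (induction j rule: nat_descend_induct[where n = n])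
  case (descend j)
  have inv: "lmonom (- evec i) \<in> img" if "i \<in> {j+1..n}" "involves (F i) 1" for i
    using descend.IH[of i] descend.prems(1) that by auto
  have "reaches j 0"
  proof (rule reaches_drop_M[OF descend.prems(1) poly_expo_0])
    show "reaches j (0 + M j)" using reaches_M[OF descend.prems] by simp
    show "reaches j (0 + evec j)" using reaches_evec by simp
    fix l assume "Poly_Mapping.lookup (M j) l \<noteq> 0"
    then have "l \<in> {j+1..n}" using poly_expo_M[of j] descend.prems(1) unfolding poly_expo_def by auto
    then show "removable j l" using removable_above[OF descend.prems(1) inv] by blast
  qed
  then show ?case by (simp add: reaches_def)
qed simp

lemma img_eq_ralg_xminus: "img = ralg (\<Union>j\<in>{2..n}. {lvar j, xminus n F j})"
  (is "_ = ralg ?T")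
proof
  have lvar_T: "lvar k \<in> ralg ?T" if "k \<in> {2..n}" for k
    using that by (intro ralg.gen) blast
  have xminus_T: "xminus n F j \<in> ralg ?T" if "j \<in> {2..n}" for j
    using that by (intro ralg.gen) blast
  show "img \<subseteq> ralg ?T" unfolding img_def gens_def
  proof (rule ralg_subset, safe)
    fix j assume j: "j \<in> {2..n}"
    then show "phi (lvar j) \<in> ralg ?T" using lvar_T by (simp add: phi_lvar)
    show "phi (xprime n F j) \<in> ralg ?T"
    proof (cases "involves (F j) 1")
      case True
      have "phi (xprime n F j) = lmonom (M j) * xminus n F j"
        using True by (simp add: phi_xprime_involves[OF j] xminus_def lvar_pow_minus_one
                            flip: lmonom_add)
      moreover have "lmonom (M j) \<in> ralg ?T"
        using poly_expo_M[of j] j by (intro lmonom_in_ralg[OF lvar_T]) (auto elim: poly_expo_mono)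
      ultimately show ?thesis using xminus_T[OF j] by (simp add: ralg.mult)
    next
      case False
      then show ?thesis using xminus_T[OF j] by (simp add: phi_xprime_not_involves[OF j] xminus_def)
    qed
  qed
  show "ralg ?T \<subseteq> img"
    unfolding img_def
    by (rule ralg_subset)
       (auto simp: xminus_def lvar_pow_minus_one lvar_in_img[unfolded img_def]
                   xprime_in_img[unfolded img_def] lmonom_minus_evec_in_img[unfolded img_def])
qed

end

theorem lemma4p21:
  fixes n :: nat and F :: "nat \<Rightarrow> 'a::{factorial_semiring, comm_ring_1, ring_char_0} lpoly"
  assumes "n \<ge> 2"
    and "LP_seed n F"
    and "condition_1_2 n F"
  shows "phi ` ralg (\<Union>j \<in> {2..n}. {lvar j, xprime n F j})
       = ralg (\<Union>j \<in> {2..n}. {lvar j, xminus n F j})"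
proof -
  interpret LP_seed_cond n F
  proof
    show "is_poly n (F i)" if "i \<in> {1..n}" for i
      using assms(2) that unfolding LP_seed_def pirreducible_def polyring_def by auto
  qed (fact assms(3))
  show ?thesis using phi_image_ralg_gens img_eq_ralg_xminus unfolding gens_def by simp
qed

end
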